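(* Let $a_1,a_2,a_3,\dots$ be nonnegative real numbers with $\sum_{j\ge1}a_j=1$, and let $a=\sup\{a_1,a_2,\dots\}$. Then for every $k\ge2$ and $2\le i\le k$, $$\sum_{j_1+\dots+j_i=k}a_{j_1}a_{j_2}\cdots a_{j_i}\le(1-a_k)a,$$ where the sum runs over all $(j_1,\dots,j_i)$ of positive integers with $j_1+\dots+j_i=k$. In particular $\sum_{j_1+\dots+j_i=k}a_{j_1}\cdots a_{j_i}\le a$ for all $k\ge1$ and $1\le i\le k$. *)

theory Defs
  imports Complex_Main
begin

definition compositions :: "nat \<Rightarrow> nat \<Rightarrow> nat list set" where
  "compositions k i = {js. length js = i \<and> (\<forall>j\<in>set js. 1 \<le> j) \<and> sum_list js = k}"

definition comp_sum :: "(nat \<Rightarrow> real) \<Rightarrow> nat \<Rightarrow> nat \<Rightarrow> real" where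
  "comp_sum a k i = (\<Sum>js\<in>compositions k i. prod_list (map a js))"

end

theory Submission
  imports Defs
begin

text \<open>Removing the first part of a composition writes the sum over \<open>i + 1\<close> parts
  as a combination of sums over \<open>i\<close> parts with weights \<open>a\<^sub>1, a\<^sub>2, \<dots>\<close>. Since the
  weights are nonnegative with total mass at most 1 and bounded by \<open>A = sup a\<^sub>j\<close>,
  induction on \<open>i\<close> gives the bound \<open>A\<close>. For \<open>i \<ge> 2\<close> no composition of \<open>k\<close>
  has first part \<open>k\<close>, so only the weights \<open>a\<^sub>1, \<dots>, a\<^sub>k\<^sub>-\<^sub>1\<close>, of total mass
  at most \<open>1 - a\<^sub>k\<close>, contribute.\<close>

lemma finite_compositions: "finite (compositions m i)"
proof (rule finite_subset)
  show "compositions m i \<subseteq> {js. set js \<subseteq> {0..m} \<and> length js = i}"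
    unfolding compositions_def using member_le_sum_list by fastforce
  show "finite {js. set js \<subseteq> {0..m} \<and> length js = i}"
    using finite_lists_length_eq[of "{0..m}" i] by simp
qed

lemma compositions_0_left: "1 \<le> i \<Longrightarrow> compositions 0 i = {}"
  by (auto simp: compositions_def Suc_le_length_iff)

lemma compositions_1_right: "compositions m 1 = (if m = 0 then {} else {[m]})"
  by (auto simp: compositions_def length_Suc_conv)

lemma bij_betw_Cons_compositions:
  "bij_betw (\<lambda>(n, js). Suc n # js) (SIGMA n:{..<m}. compositions (m - Suc n) i)
     (compositions m (Suc i))"
proof (rule bij_betw_imageI)
  show "inj_on (\<lambda>(n, js). Suc n # js) (SIGMA n:{..<m}. compositions (m - Suc n) i)"
    by (auto simp: inj_on_def)
  show "(\<lambda>(n, js). Suc n # js) ` (SIGMA n:{..<m}. compositions (m - Suc n) i)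
        = compositions m (Suc i)"
  proof (intro equalityI subsetI)
    fix xs assume "xs \<in> compositions m (Suc i)"
    then obtain j js where "xs = j # js" "1 \<le> j" "js \<in> compositions (m - j) i" "j \<le> m"
      unfolding compositions_def by (cases xs) auto
    then have "xs = (\<lambda>(n, js). Suc n # js) (j - 1, js)"
      and "(j - 1, js) \<in> (SIGMA n:{..<m}. compositions (m - Suc n) i)"
      by auto
    then show "xs \<in> (\<lambda>(n, js). Suc n # js) ` (SIGMA n:{..<m}. compositions (m - Suc n) i)"
      by blast
  qed (auto simp: compositions_def)
qed

lemma comp_sum_Suc_right:
  "comp_sum a m (Suc i) = (\<Sum>n<m. a (Suc n) * comp_sum a (m - Suc n) i)"
proof -
  have "comp_sum a m (Suc i) = (\<Sum>(n, js)\<in>(SIGMA n:{..<m}. compositions (m - Suc n) i).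
          prod_list (map a (Suc n # js)))"
    unfolding comp_sum_def
    by (subst sum.reindex_bij_betw[OF bij_betw_Cons_compositions, symmetric])
       (simp add: case_prod_unfold)
  also have "\<dots> = (\<Sum>n<m. \<Sum>js\<in>compositions (m - Suc n) i. a (Suc n) * prod_list (map a js))"
    by (subst sum.Sigma) (auto simp: finite_compositions)
  also have "\<dots> = (\<Sum>n<m. a (Suc n) * comp_sum a (m - Suc n) i)"
    by (simp add: comp_sum_def sum_distrib_left)
  finally show ?thesis .
qed

lemma comp_sum_0_left: "1 \<le> i \<Longrightarrow> comp_sum a 0 i = 0"
  by (simp add: comp_sum_def compositions_0_left)

lemma comp_sum_1_right: "comp_sum a m 1 = (if m = 0 then 0 else a m)"
  unfolding comp_sum_def compositions_1_right by simp

context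
  fixes a :: "nat \<Rightarrow> real" and A :: real
  assumes nonneg: "\<And>j. 1 \<le> j \<Longrightarrow> 0 \<le> a j"
    and le_bound: "\<And>j. 1 \<le> j \<Longrightarrow> a j \<le> A"
    and partial_sums_le_1: "\<And>m. (\<Sum>n<m. a (Suc n)) \<le> 1"
begin

lemma bound_nonneg: "0 \<le> A"
  using nonneg[of 1] le_bound[of 1] by simp

lemma comp_sum_le_bound: "1 \<le> i \<Longrightarrow> comp_sum a m i \<le> A"
proof (induction i arbitrary: m rule: nat_induct_at_least)
  case base
  show ?case using le_bound[of m] bound_nonneg comp_sum_1_right[of a m] by simp
next
  case (Suc i)
  have "comp_sum a m (Suc i) = (\<Sum>n<m. a (Suc n) * comp_sum a (m - Suc n) i)"
    by (rule comp_sum_Suc_right)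
  also have "\<dots> \<le> (\<Sum>n<m. a (Suc n) * A)"
    by (intro sum_mono mult_left_mono Suc.IH) (simp add: nonneg)
  also have "\<dots> = (\<Sum>n<m. a (Suc n)) * A"
    by (simp add: sum_distrib_right)
  also have "\<dots> \<le> A"
    using mult_right_mono[OF partial_sums_le_1 bound_nonneg] by simp
  finally show ?case .
qed

lemma comp_sum_le_one_minus_times_bound:
  assumes "1 \<le> k" and "2 \<le> i"
  shows "comp_sum a k i \<le> (1 - a k) * A"
proof -
  obtain i' where i': "i = Suc i'" "1 \<le> i'" using \<open>2 \<le> i\<close> by (cases i) auto
  obtain k' where k': "k = Suc k'" using \<open>1 \<le> k\<close> by (cases k) auto
  have "comp_sum a k i = (\<Sum>n<k'. a (Suc n) * comp_sum a (k - Suc n) i')"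
    using i' k' by (simp add: comp_sum_Suc_right comp_sum_0_left)
  also have "\<dots> \<le> (\<Sum>n<k'. a (Suc n) * A)"
    by (intro sum_mono mult_left_mono comp_sum_le_bound i') (simp add: nonneg)
  also have "\<dots> = (\<Sum>n<k'. a (Suc n)) * A"
    by (simp add: sum_distrib_right)
  also have "\<dots> \<le> (1 - a k) * A"
    using partial_sums_le_1[of k] k' by (intro mult_right_mono bound_nonneg) simp
  finally show ?thesis .
qed

end

lemma partial_sums_le_suminf_1:
  fixes a :: "nat \<Rightarrow> real"
  assumes "\<And>j. 1 \<le> j \<Longrightarrow> 0 \<le> a j" and "(\<lambda>n. a (Suc n)) sums 1"
  shows "(\<Sum>n<m. a (Suc n)) \<le> 1"
  using sum_le_suminf[OF sums_summable[OF assms(2)], of "{..<m}"] assms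
  by (simp add: sums_unique[symmetric])

lemma term_le_Sup_terms:
  fixes a :: "nat \<Rightarrow> real"
  assumes nonneg: "\<And>j. 1 \<le> j \<Longrightarrow> 0 \<le> a j"
    and partial_sums: "\<And>m. (\<Sum>n<m. a (Suc n)) \<le> 1"
    and "1 \<le> j"
  shows "a j \<le> Sup (a ` {1..})"
proof (rule cSup_upper)
  have "a (Suc n) \<le> 1" for n
    using member_le_sum[of n "{..<Suc n}" "\<lambda>n. a (Suc n)"] partial_sums[of "Suc n"] nonneg
    by simp
  then have "a j \<le> 1" if "1 \<le> j" for j
    using that by (cases j) auto
  then show "bdd_above (a ` {1..})"
    by (intro bdd_aboveI[of _ 1]) auto
qed (use \<open>1 \<le> j\<close> in simp)

theorem lemma4:
  fixes a :: "nat \<Rightarrow> real"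
  assumes nonneg: "\<And>j. 1 \<le> j \<Longrightarrow> 0 \<le> a j"
    and sum1: "(\<lambda>n. a (Suc n)) sums 1"
  shows "(\<forall>k i. 2 \<le> k \<longrightarrow> 2 \<le> i \<longrightarrow> i \<le> k \<longrightarrow>
            comp_sum a k i \<le> (1 - a k) * Sup (a ` {1..}))
       \<and> (\<forall>k i. 1 \<le> k \<longrightarrow> 1 \<le> i \<longrightarrow> i \<le> k \<longrightarrow>
            comp_sum a k i \<le> Sup (a ` {1..}))"
proof -
  have partial_sums: "(\<Sum>n<m. a (Suc n)) \<le> 1" for m
    using nonneg sum1 by (rule partial_sums_le_suminf_1)
  note le_Sup = term_le_Sup_terms[OF nonneg partial_sums]
  show ?thesis
    using comp_sum_le_one_minus_times_bound[OF nonneg le_Sup partial_sums]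
      comp_sum_le_bound[OF nonneg le_Sup partial_sums]
    by auto
qed

end
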